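(* Let $Q$ be a finite closed down set of pairs with parameters $p,q,k$, $I_0,\dots,I_{k-1}$, $II_1,\dots,II_k$ as described in the context. Then $$|Q|\ge\sum_{j=1}^k II_j\Big(p+I_0+\sum_{\ell=1}^{j-1}(II_\ell+I_\ell)\Big).$$
   Context: Let $c_1,c_2,\dots$ and $s_1,s_2,\dots$ be distinct vertices, and let $Q$ be a finite set of pairs $c_as_b$ that is closed down: $c_as_b\in Q$ implies $c_{a'}s_{b'}\in Q$ for all $a'\le a$, $b'\le b$. Write $[i]\times[j]=\{c_as_b:a\le i,b\le j\}$, and let $\nu(\ell,Q)$ be the matching number of the bipartite graph with sides $\{c_1,\dots,c_\ell\},\{s_1,\dots,s_\ell\}$ and edge set $([\ell]\times[\ell])\setminus Q$. Let $p\ge0$ be the largest integer with $[p]\times[p]\subseteq Q$, and $q\ge0$ the least integer such that $\nu(\ell,Q)=\ell$ for all $\ell\ge p+q$. For every $\ell>p$ one has $\nu(\ell,Q)-\nu(\ell-1,Q)\in\{1,2\}$. The integer interval $(p,p+q]$ is divided, in increasing order, into consecutive left-open right-closed integer intervals $\mathcal O_0,\mathcal T_1,\mathcal O_1,\dots,\mathcal O_{k-1},\mathcal T_k$ such that the increment $\nu(\ell,Q)-\nu(\ell-1,Q)$ is $1$ for $\ell$ in each $\mathcal O_j$ and $2$ for $\ell$ in each $\mathcal T_j$; all intervals except possibly $\mathcal O_0$ are nonempty and the last one is $\mathcal T_k$. Set $I_j=|\mathcal O_j|$ and $II_j=|\mathcal T_j|$. *)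

theory Defs
  imports Main
begin

text \<open>Vertex c_a is encoded by index a, vertex s_b by index b (a, b \<ge> 1);
  the pair c_a s_b is encoded as (a, b) :: nat \<times> nat.\<close>

definition box :: "nat \<Rightarrow> nat \<Rightarrow> (nat \<times> nat) set" where
  "box i j = {1..i} \<times> {1..j}"

definition closed_down :: "(nat \<times> nat) set \<Rightarrow> bool" where
  "closed_down Q \<longleftrightarrow> Q \<subseteq> {1..} \<times> {1..} \<and>
     (\<forall>a b a' b'. (a, b) \<in> Q \<longrightarrow> 1 \<le> a' \<longrightarrow> a' \<le> a \<longrightarrow> 1 \<le> b' \<longrightarrow> b' \<le> b \<longrightarrow> (a', b') \<in> Q)"

definition bip_matching :: "(nat \<times> nat) set \<Rightarrow> (nat \<times> nat) set \<Rightarrow> bool" where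
  "bip_matching E M \<longleftrightarrow> M \<subseteq> E \<and> inj_on fst M \<and> inj_on snd M"

definition nu :: "nat \<Rightarrow> (nat \<times> nat) set \<Rightarrow> nat" where
  "nu l Q = Max (card ` {M. bip_matching (box l l - Q) M})"

end

theory Submission
  imports Defs
begin

text \<open>Let L_j = p + I_0 + (II_1 + I_1) + ... + (II_(j-1) + I_(j-1)) be the left end of T_j and
  D_j = II_j + ... + II_k. Counting increments from L_j up to p + q, where nu is full, shows
  that nu falls short of l by exactly D_j at l = L_j. The antidiagonal matching
  {(a, L_j + D_j - a)} is then too large to avoid Q, and the vertex-cover bound
  nu l \<le> 2 l - a - b for (a, b) \<in> Q, combined with the increment 1 at L_j, forces Q to contain the corner (D_j, L_j) or
  (L_j, D_j). Being closed down, Q contains the rectangles below these corners, and a disjoint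
  staircase inside their union has exactly II_1 L_1 + ... + II_k L_k cells.\<close>

lemma finite_matchings: "finite {M. bip_matching (box l l - Q) M}"
proof (rule finite_subset)
  show "{M. bip_matching (box l l - Q) M} \<subseteq> Pow (box l l)"
    by (auto simp: bip_matching_def)
qed (simp add: box_def)

lemma card_le_nu: "bip_matching (box l l - Q) M \<Longrightarrow> card M \<le> nu l Q"
  unfolding nu_def by (rule Max_ge) (use finite_matchings in auto)

lemma nu_leI:
  assumes "\<And>M. bip_matching (box l l - Q) M \<Longrightarrow> card M \<le> n"
  shows "nu l Q \<le> n"
proof -
  have "bip_matching (box l l - Q) {}" by (simp add: bip_matching_def)
  then show ?thesis
    unfolding nu_def using assms finite_matchings[of l Q] by (subst Max_le_iff) auto
qed

lemma card_le_of_inj_on_into: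
  assumes "inj_on f M" "f ` M \<subseteq> {a<..l}"
  shows "card M \<le> l - a"
  using card_mono[OF finite_greaterThanAtMost assms(2)] card_image[OF assms(1)] by simp

lemma nu_le: "nu l Q \<le> l"
proof (rule nu_leI)
  fix M assume "bip_matching (box l l - Q) M"
  then have "inj_on fst M" "fst ` M \<subseteq> {0<..l}"
    by (auto simp: bip_matching_def box_def)
  then show "card M \<le> l" by (metis card_le_of_inj_on_into minus_nat.diff_0)
qed

lemma nu_ge_antidiagonal:
  assumes "1 \<le> D" "\<forall>a\<in>{D..l}. (a, l + D - a) \<notin> Q"
  shows "l + 1 - D \<le> nu l Q"
proof -
  let ?M = "(\<lambda>a. (a, l + D - a)) ` {D..l}"
  have "bip_matching (box l l - Q) ?M"
    using assms by (auto simp: bip_matching_def box_def inj_on_def)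
  moreover have "card ?M = l + 1 - D"
    by (subst card_image) (auto simp: inj_on_def)
  ultimately show ?thesis by (metis card_le_nu)
qed

text \<open>The vertices c_(a+1), ..., c_l, s_(b+1), ..., s_l cover every edge, since Q contains the
  box below (a, b).\<close>
lemma nu_add_le_of_mem:
  assumes cd: "closed_down Q" and ab: "(a, b) \<in> Q" "a \<le> l" "b \<le> l"
  shows "nu l Q + a + b \<le> 2 * l"
proof -
  have "nu l Q \<le> (l - b) + (l - a)"
  proof (rule nu_leI)
    fix M assume M: "bip_matching (box l l - Q) M"
    let ?M1 = "{e \<in> M. fst e \<le> a}" and ?M2 = "{e \<in> M. \<not> fst e \<le> a}"
    have "inj_on snd ?M1" "inj_on fst ?M2"
      using M by (auto simp: bip_matching_def intro: inj_on_subset)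
    moreover have "snd ` ?M1 \<subseteq> {b<..l}"
    proof
      fix y assume "y \<in> snd ` ?M1"
      then obtain x where "(x, y) \<in> box l l - Q" "x \<le> a"
        using M by (auto simp: bip_matching_def)
      then show "y \<in> {b<..l}"
        using cd ab unfolding closed_down_def box_def by (metis DiffE atLeastAtMost_iff
            greaterThanAtMost_iff mem_Sigma_iff not_le_imp_less)
    qed
    moreover have "fst ` ?M2 \<subseteq> {a<..l}"
      using M by (auto simp: bip_matching_def box_def)
    ultimately have "card ?M1 \<le> l - b" "card ?M2 \<le> l - a"
      by (auto intro: card_le_of_inj_on_into)
    moreover have "card M \<le> card ?M1 + card ?M2"
    proof -
      have "M = ?M1 \<union> ?M2" by blast
      also have "card \<dots> \<le> card ?M1 + card ?M2" by (rule card_Un_le)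
      finally show ?thesis .
    qed
    ultimately show "card M \<le> (l - b) + (l - a)" by linarith
  qed
  then show ?thesis using ab by linarith
qed

text \<open>The antidiagonal (a, l + D - a), D \<le> a \<le> l, has more edges than a maximum matching,
  so it meets Q; by the vertex-cover bound at l - 1 the meeting point must be one of its ends.\<close>
lemma corner_mem_of_deficiency:
  assumes cd: "closed_down Q" and D: "1 \<le> D"
    and deficient: "nu l Q + D \<le> l" and step: "l \<le> nu (l - 1) Q + D + 1"
  shows "(D, l) \<in> Q \<or> (l, D) \<in> Q"
proof -
  obtain a where a: "a \<in> {D..l}" "(a, l + D - a) \<in> Q"
    using nu_ge_antidiagonal[OF D, of l Q] deficient by force
  show ?thesis
  proof (rule ccontr)
    assume "\<not> ?thesis"
    with a have "a \<noteq> D" "a \<noteq> l" by auto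
    with a have "a \<le> l - 1" "l + D - a \<le> l - 1" by auto
    from nu_add_le_of_mem[OF cd a(2) this] a(1)
    have "nu (l - 1) Q + l + D \<le> 2 * (l - 1)" by simp
    with step D a(1) show False by auto
  qed
qed

lemma box_subset_of_mem:
  "closed_down Q \<Longrightarrow> (a, b) \<in> Q \<Longrightarrow> box a b \<subseteq> Q"
  unfolding closed_down_def box_def by auto

lemma nu_eventually_full:
  assumes "finite Q"
  obtains B where "\<And>l. B \<le> l \<Longrightarrow> nu l Q = l"
proof -
  obtain B where B: "\<And>a b. (a, b) \<in> Q \<Longrightarrow> a + b < B"
    using finite_nat_set_iff_bounded[of "case_prod (+) ` Q"] assms by fastforce
  have "nu l Q = l" if "B \<le> l" for l
  proof -
    have "\<forall>a\<in>{1..l}. (a, l + 1 - a) \<notin> Q" using B that by fastforce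
    from nu_ge_antidiagonal[OF _ this] nu_le[of l Q] show ?thesis by simp
  qed
  then show thesis by (rule that)
qed

lemma nu_full_beyond_Least:
  assumes "finite Q" "p + (LEAST q. \<forall>l\<ge>p + q. nu l Q = l) \<le> l"
  shows "nu l Q = l"
proof -
  obtain B where "\<And>l. B \<le> l \<Longrightarrow> nu l Q = l" using nu_eventually_full assms(1) by blast
  then have "\<forall>l\<ge>p + B. nu l Q = l" by simp
  from LeastI[of "\<lambda>q. \<forall>l\<ge>p + q. nu l Q = l", OF this] assms(2) show ?thesis by blast
qed

lemma box_Greatest_subset:
  assumes "finite Q"
  shows "box (GREATEST p. box p p \<subseteq> Q) (GREATEST p. box p p \<subseteq> Q) \<subseteq> Q"
proof -
  obtain B where B: "\<And>a b. (a, b) \<in> Q \<Longrightarrow> a \<le> B"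
    using assms finite_nat_set_iff_bounded_le[of "fst ` Q"] by fastforce
  have bounded: "y \<le> B" if "box y y \<subseteq> Q" for y
  proof (cases "y = 0")
    case False
    then have "(y, y) \<in> box y y" by (simp add: box_def)
    with that B show ?thesis by blast
  qed simp
  show ?thesis by (rule GreatestI_nat[of _ 0 B]) (simp add: box_def, rule bounded)
qed

lemma count_increments:
  fixes f :: "nat \<Rightarrow> nat"
  assumes "a \<le> b"
    and step: "\<And>l. a < l \<Longrightarrow> l \<le> b \<Longrightarrow> f l = f (l - 1) + (if l \<in> T then 2 else 1)"
  shows "f b = f a + (b - a) + card (T \<inter> {a<..b})"
  using \<open>a \<le> b\<close>
proof (induction rule: dec_induct)
  case (step n)
  have "T \<inter> {a<..Suc n} =
      (if Suc n \<in> T then insert (Suc n) (T \<inter> {a<..n}) else T \<inter> {a<..n})"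
    using step.hyps by (auto simp: le_Suc_eq)
  with step show ?case
    using assms(2)[of "Suc n"] by (simp add: Suc_diff_le)
qed simp

locale separated_intervals =
  fixes L II :: "nat \<Rightarrow> nat" and k :: nat
  assumes separated: "\<And>j. j \<in> {1..<k} \<Longrightarrow> L j + II j < L (Suc j)"
begin

lemma end_less_start:
  assumes "1 \<le> i" "i < i'" "i' \<le> k"
  shows "L i + II i < L i'"
  using \<open>i < i'\<close>[unfolded Suc_le_eq[symmetric]] \<open>i' \<le> k\<close>
proof (induction rule: dec_induct)
  case base
  then show ?case using separated assms(1) by simp
next
  case (step n)
  then show ?case using separated[of n] assms(1) by fastforce
qed

lemma start_le_start: "1 \<le> i \<Longrightarrow> i \<le> i' \<Longrightarrow> i' \<le> k \<Longrightarrow> L i \<le> L i'"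
  using end_less_start[of i i'] by (cases "i = i'") auto

lemma end_le_last_end: "j \<in> {1..k} \<Longrightarrow> L j + II j \<le> L k + II k"
  using end_less_start[of j k] by (cases "j = k") auto

lemma start_notin_intervals:
  assumes "j \<in> {1..k}"
  shows "L j \<notin> (\<Union>i\<in>{1..k}. {L i<..L i + II i})"
proof
  assume "L j \<in> (\<Union>i\<in>{1..k}. {L i<..L i + II i})"
  then obtain i where i: "i \<in> {1..k}" "L i < L j" "L j \<le> L i + II i" by auto
  with assms show False
    using end_less_start[of i j] start_le_start[of j i] by (cases "i < j") auto
qed

lemma intervals_after_start:
  assumes "j \<in> {1..k}"
  shows "(\<Union>i\<in>{1..k}. {L i<..L i + II i}) \<inter> {L j<..L k + II k}
      = (\<Union>i\<in>{j..k}. {L i<..L i + II i})"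
proof (intro equalityI subsetI)
  fix x assume "x \<in> (\<Union>i\<in>{1..k}. {L i<..L i + II i}) \<inter> {L j<..L k + II k}"
  then obtain i where i: "i \<in> {1..k}" "L i < x" "x \<le> L i + II i" "L j < x" by auto
  with assms have "j \<le> i" using end_less_start[of i j] by force
  with i show "x \<in> (\<Union>i\<in>{j..k}. {L i<..L i + II i})" by auto
next
  fix x assume "x \<in> (\<Union>i\<in>{j..k}. {L i<..L i + II i})"
  then obtain i where i: "i \<in> {j..k}" "L i < x" "x \<le> L i + II i" by auto
  with assms show "x \<in> (\<Union>i\<in>{1..k}. {L i<..L i + II i}) \<inter> {L j<..L k + II k}"
    using start_le_start[of j i] end_le_last_end[of i] by auto
qed

lemma intervals_disjoint:
  assumes "i \<in> {1..k}" "i' \<in> {1..k}" "i \<noteq> i'"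
  shows "{L i<..L i + II i} \<inter> {L i'<..L i' + II i'} = {}"
proof (cases "i < i'")
  case True
  then show ?thesis using end_less_start[of i i'] assms by auto
next
  case False
  then show ?thesis using end_less_start[of i' i] assms by auto
qed

lemma card_intervals_after_start:
  assumes "j \<in> {1..k}"
  shows "card ((\<Union>i\<in>{1..k}. {L i<..L i + II i}) \<inter> {L j<..L k + II k}) = (\<Sum>i=j..k. II i)"
proof -
  have "card (\<Union>i\<in>{j..k}. {L i<..L i + II i}) = (\<Sum>i=j..k. card {L i<..L i + II i})"
    using assms intervals_disjoint by (intro card_UN_disjoint) auto
  then show ?thesis using intervals_after_start[OF assms] by simp
qed

lemma deficiency_at_start:
  fixes f :: "nat \<Rightarrow> nat"
  assumes "j \<in> {1..k}" "a \<le> L j"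
    and step: "\<And>l. a < l \<Longrightarrow> l \<le> L k + II k \<Longrightarrow>
      f l = f (l - 1) + (if l \<in> (\<Union>i\<in>{1..k}. {L i<..L i + II i}) then 2 else 1)"
    and full: "f (L k + II k) = L k + II k"
  shows "f (L j) + (\<Sum>i=j..k. II i) = L j"
proof -
  have "L j \<le> L k + II k" using end_le_last_end[OF assms(1)] by simp
  then have "f (L k + II k) = f (L j) + (L k + II k - L j)
      + card ((\<Union>i\<in>{1..k}. {L i<..L i + II i}) \<inter> {L j<..L k + II k})"
    using assms(2) by (intro count_increments step) simp_all
  then have "f (L k + II k) = f (L j) + (L k + II k - L j) + (\<Sum>i=j..k. II i)"
    using card_intervals_after_start[OF assms(1)] by simp
  with full \<open>L j \<le> L k + II k\<close> show ?thesis by simp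
qed

lemma total_length_le_start:
  fixes f :: "nat \<Rightarrow> nat"
  assumes "j \<in> {1..k}" "a \<le> L 1"
    and step: "\<And>l. a < l \<Longrightarrow> l \<le> L k + II k \<Longrightarrow>
      f l = f (l - 1) + (if l \<in> (\<Union>i\<in>{1..k}. {L i<..L i + II i}) then 2 else 1)"
    and full: "f (L k + II k) = L k + II k"
  shows "(\<Sum>i=1..k. II i) \<le> L j"
proof -
  from assms(1) have "f (L 1) + (\<Sum>i=1..k. II i) = L 1"
    by (intro deficiency_at_start[OF _ assms(2) step full]) simp
  with start_le_start[of 1 j] assms(1) show ?thesis by auto
qed

end

text \<open>With D_j = w_j + ... + w_k and N = D_1, the square [N] x [N] and, for each j, the strip
  (D_(j+1), D_j] x (N, L_j] or its mirror image lie below a corner in Q. They are pairwise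
  disjoint, as each strip has one coordinate in its own range (D_(j+1), D_j] \<subseteq> [N] and
  the other > N.\<close>
lemma card_ge_staircase:
  fixes w L :: "nat \<Rightarrow> nat"
  assumes fin: "finite Q" and cd: "closed_down Q"
    and corner: "\<And>j. j \<in> {1..k} \<Longrightarrow> ((\<Sum>i=j..k. w i), L j) \<in> Q \<or> (L j, (\<Sum>i=j..k. w i)) \<in> Q"
    and tall: "\<And>j. j \<in> {1..k} \<Longrightarrow> (\<Sum>i=1..k. w i) \<le> L j"
  shows "(\<Sum>j=1..k. w j * L j) \<le> card Q"
proof -
  define D where "D j = (\<Sum>i=j..k. w i)" for j
  define N where "N = D 1"
  define block where "block j = (if (D j, L j) \<in> Q then {D (Suc j)<..D j} \<times> {N<..L j}
    else {N<..L j} \<times> {D (Suc j)<..D j})" for j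
  have D_Suc: "D j = w j + D (Suc j)" if "j \<le> k" for j
    unfolding D_def using that by (rule sum.atLeast_Suc_atMost)
  have D_antimono: "D j' \<le> D j" if "j \<le> j'" for j j'
    unfolding D_def using that by (intro sum_mono2) auto
  have N_le: "N \<le> L j" if "j \<in> {1..k}" for j
    using tall[OF that] by (simp add: N_def D_def)
  have square: "box N N \<subseteq> Q"
  proof (cases "k = 0")
    case False
    then have one: "1 \<in> {1..k}" by simp
    then have "box N (L 1) \<subseteq> Q \<or> box (L 1) N \<subseteq> Q"
      using corner box_subset_of_mem[OF cd] unfolding N_def D_def by blast
    moreover have "box N N \<subseteq> box N (L 1)" "box N N \<subseteq> box (L 1) N"
      using N_le[OF one] by (auto simp: box_def)
    ultimately show ?thesis by blast
  qed (simp add: N_def D_def box_def)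
  have block_sub: "block j \<subseteq> Q" if "j \<in> {1..k}" for j
  proof (cases "(D j, L j) \<in> Q")
    case True
    moreover have "block j \<subseteq> box (D j) (L j)"
      using True unfolding block_def box_def by auto
    ultimately show ?thesis using box_subset_of_mem[OF cd] by blast
  next
    case False
    then have "(L j, D j) \<in> Q" using corner[OF that] by (simp add: D_def)
    moreover have "block j \<subseteq> box (L j) (D j)"
      using False unfolding block_def box_def by auto
    ultimately show ?thesis using box_subset_of_mem[OF cd] by blast
  qed
  have card_block: "card (block j) = w j * (L j - N)" if "j \<in> {1..k}" for j
    using D_Suc[of j] that by (simp add: block_def card_cartesian_product)
  have blocks_disjoint: "block j \<inter> block j' = {}" if "j \<in> {1..k}" "j' \<in> {1..k}" "j < j'" for j j'
  proof -
    have "D j' \<le> D (Suc j)" "D j \<le> N" "D j' \<le> N"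
      using that D_antimono unfolding N_def by auto
    then show ?thesis unfolding block_def by auto
  qed
  have square_disjoint: "box N N \<inter> (\<Union>j\<in>{1..k}. block j) = {}"
    unfolding box_def block_def by auto
  have "(\<Sum>j=1..k. w j * L j) = N * N + (\<Sum>j=1..k. w j * (L j - N))"
  proof -
    have "N * N = (\<Sum>j=1..k. w j * N)" by (simp add: N_def D_def sum_distrib_right)
    then show ?thesis
      using N_le by (simp add: sum.distrib[symmetric] add_mult_distrib2[symmetric])
  qed
  also have "\<dots> = card (box N N \<union> (\<Union>j\<in>{1..k}. block j))"
  proof -
    have "card (\<Union>j\<in>{1..k}. block j) = (\<Sum>j=1..k. card (block j))"
    proof (rule card_UN_disjoint)
      show "\<forall>j\<in>{1..k}. \<forall>j'\<in>{1..k}. j \<noteq> j' \<longrightarrow> block j \<inter> block j' = {}"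
        using blocks_disjoint by (metis Int_commute linorder_neqE_nat)
    qed (simp_all add: block_def)
    with card_block square_disjoint show ?thesis
      by (simp add: card_Un_disjoint box_def block_def)
  qed
  also have "\<dots> \<le> card Q"
    using square block_sub by (intro card_mono fin) blast
  finally show ?thesis .
qed

lemma (in separated_intervals) corner_mem_at_start:
  assumes cd: "closed_down Q" and box: "box p p \<subseteq> Q"
    and j: "j \<in> {1..k}" and "p \<le> L j" and "1 \<le> II j"
    and step: "\<And>l. p < l \<Longrightarrow> l \<le> L k + II k \<Longrightarrow>
      nu l Q = nu (l - 1) Q + (if l \<in> (\<Union>i\<in>{1..k}. {L i<..L i + II i}) then 2 else 1)"
    and full: "nu (L k + II k) Q = L k + II k"
  shows "((\<Sum>i=j..k. II i), L j) \<in> Q \<or> (L j, (\<Sum>i=j..k. II i)) \<in> Q"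
proof -
  let ?D = "\<Sum>i=j..k. II i"
  have deficiency: "nu (L j) Q + ?D = L j"
    using deficiency_at_start[OF j \<open>p \<le> L j\<close> step full] by blast
  have "II j \<le> ?D" using j by (intro member_le_sum) auto
  with \<open>1 \<le> II j\<close> have D_pos: "1 \<le> ?D" by simp
  show ?thesis
  proof (cases "p < L j")
    case True
    have "L j \<le> L k + II k" using end_le_last_end[OF j] by simp
    with True have "nu (L j) Q = nu (L j - 1) Q + 1"
      using step start_notin_intervals[OF j] by simp
    with cd D_pos deficiency show ?thesis by (intro corner_mem_of_deficiency) simp_all
  next
    case False
    with \<open>p \<le> L j\<close> D_pos deficiency have "(?D, L j) \<in> box p p" by (auto simp: box_def)
    with box show ?thesis by blast
  qed
qed

theorem lemma7:
  fixes Q :: "(nat \<times> nat) set" and p q k :: nat and I II :: "nat \<Rightarrow> nat"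
  assumes fin: "finite Q"
    and cd: "closed_down Q"
    and p_def: "p = (GREATEST p. box p p \<subseteq> Q)"
    and q_def: "q = (LEAST q. \<forall>l\<ge>p + q. nu l Q = l)"
    and II_pos: "\<forall>j\<in>{1..k}. II j \<ge> 1"
    and I_pos: "\<forall>j\<in>{1..<k}. I j \<ge> 1"
    and len: "q = I 0 + (\<Sum>j=1..k. II j) + (\<Sum>j=1..<k. I j)"
    and incr: "\<forall>l. p < l \<and> l \<le> p + q \<longrightarrow>
        nu l Q = nu (l - 1) Q +
          (if \<exists>j\<in>{1..k}. p + I 0 + (\<Sum>i=1..<j. II i + I i) < l
                       \<and> l \<le> p + I 0 + (\<Sum>i=1..<j. II i + I i) + II j
           then 2 else 1)"
  shows "int (card Q) \<ge> (\<Sum>j=1..k. int (II j) * int (p + I 0 + (\<Sum>i=1..<j. II i + I i)))"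
proof (cases "k = 0")
  case False
  define L where "L j = p + I 0 + (\<Sum>i=1..<j. II i + I i)" for j
  interpret separated_intervals L II k
    by unfold_locales (use I_pos in \<open>fastforce simp: L_def\<close>)
  have "(\<Sum>j=1..k. II j) = (\<Sum>j=1..<k. II j) + II k"
    using False by (simp add: sum.atLeastLessThan_Suc flip: atLeastLessThanSuc_atLeastAtMost)
  then have last: "L k + II k = p + q" by (simp add: L_def len sum.distrib)
  have full: "nu (L k + II k) Q = L k + II k"
    unfolding last q_def by (rule nu_full_beyond_Least[OF fin, where p = p]) simp
  have box: "box p p \<subseteq> Q"
    unfolding p_def by (rule box_Greatest_subset[OF fin])
  have step: "\<And>l. p < l \<Longrightarrow> l \<le> L k + II k \<Longrightarrow>
      nu l Q = nu (l - 1) Q + (if l \<in> (\<Union>i\<in>{1..k}. {L i<..L i + II i}) then 2 else 1)"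
    using incr unfolding last by (simp add: L_def)
  have corner: "((\<Sum>i=j..k. II i), L j) \<in> Q \<or> (L j, (\<Sum>i=j..k. II i)) \<in> Q"
    if "j \<in> {1..k}" for j
    using that II_pos by (intro corner_mem_at_start[OF cd box _ _ _ step full]) (auto simp: L_def)
  have tall: "(\<Sum>i=1..k. II i) \<le> L j" if "j \<in> {1..k}" for j
    using that by (rule total_length_le_start[OF _ _ step full]) (auto simp: L_def)
  have "int (\<Sum>j=1..k. II j * L j) \<le> int (card Q)"
    using card_ge_staircase[OF fin cd corner tall] by (rule of_nat_mono)
  then show ?thesis
    by (simp only: of_nat_sum of_nat_mult L_def)
qed simp

end
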